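(* Let $(X,d)$ be a separable metric space, $T\colon X\to X$ a Borel measurable map and $\mu$ a $T$-invariant Borel probability measure on $X$. Let $(s_n)_{n\ge1}$ be a scale sequence which is either monotone or steady. Then the proximality gauge $\psi(x,y)=\liminf_{n\to\infty} s_n\, d(T^nx,T^ny)$ satisfies $\psi(Tx,Ty)=\psi(x,y)$ for $\mu\times\mu$-almost every $(x,y)\in X^2$.
   Context: A scale sequence is a sequence $(s_n)_{n\ge1}$ of positive reals with $s_n\to\infty$. It is monotone if $s_{n+1}\ge s_n$ for all sufficiently large $n$, and steady if $\lim_{n\to\infty}s_{n+1}/s_n=1$. *)

theory Defs
  imports "HOL-Probability.Probability"
begin

text \<open>A scale sequence: positive reals (indexed from 1) tending to infinity.
  The value at index 0 is irrelevant.\<close>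
definition scale_seq :: "(nat \<Rightarrow> real) \<Rightarrow> bool" where
  "scale_seq s \<longleftrightarrow> (\<forall>n\<ge>1. s n > 0) \<and> filterlim s at_top sequentially"

definition monotone_scale :: "(nat \<Rightarrow> real) \<Rightarrow> bool" where
  "monotone_scale s \<longleftrightarrow> (\<forall>\<^sub>F n in sequentially. s (Suc n) \<ge> s n)"

definition steady_scale :: "(nat \<Rightarrow> real) \<Rightarrow> bool" where
  "steady_scale s \<longleftrightarrow> ((\<lambda>n. s (Suc n) / s n) \<longlonglongrightarrow> 1)"

definition prox_gauge :: "(nat \<Rightarrow> real) \<Rightarrow> ('a::metric_space \<Rightarrow> 'a) \<Rightarrow> 'a \<Rightarrow> 'a \<Rightarrow> ereal" where
  "prox_gauge s T x y = liminf (\<lambda>n. ereal (s n * dist ((T ^^ n) x) ((T ^^ n) y)))"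

end

theory Submission
  imports Defs
begin

text \<open>For a steady scale the identity holds pointwise: shifting the orbit changes each term of
  the liminf by the factor \<open>s n / s (n + 1) \<rightarrow> 1\<close>. For a monotone scale one only gets
  \<open>\<psi>(Tx,Ty) \<le> \<psi>(x,y)\<close>, and \<open>T \<times> T\<close> preserves \<open>\<mu> \<times> \<mu>\<close>. A measurable function that
  decreases along a measure-preserving map of a finite measure space is almost surely invariant:
  each superlevel set \<open>{\<psi> > c}\<close> contains its preimage, which has the same finite measure, so
  their difference is null; taking \<open>c\<close> rational covers all strict drops. Neither argument needs
  the positivity or divergence of the scale.\<close>

lemma prox_gauge_apply:
  "prox_gauge s T (T x) (T y) = liminf (\<lambda>n. ereal (s n * dist ((T ^^ Suc n) x) ((T ^^ Suc n) y)))"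
  unfolding prox_gauge_def by (simp add: funpow_swap1)

lemma prox_gauge_Suc:
  "prox_gauge s T x y = liminf (\<lambda>n. ereal (s (Suc n) * dist ((T ^^ Suc n) x) ((T ^^ Suc n) y)))"
  unfolding prox_gauge_def
  using liminf_shift[of "\<lambda>n. ereal (s n * dist ((T ^^ n) x) ((T ^^ n) y))"] by simp

lemma prox_gauge_apply_le:
  assumes "monotone_scale s"
  shows "prox_gauge s T (T x) (T y) \<le> prox_gauge s T x y"
  unfolding prox_gauge_apply prox_gauge_Suc
proof (rule Liminf_mono)
  show "\<forall>\<^sub>F n in sequentially. ereal (s n * dist ((T ^^ Suc n) x) ((T ^^ Suc n) y))
      \<le> ereal (s (Suc n) * dist ((T ^^ Suc n) x) ((T ^^ Suc n) y))"
    using assms unfolding monotone_scale_def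
    by (rule eventually_mono) (simp add: mult_right_mono)
qed

lemma prox_gauge_apply_eq:
  assumes "steady_scale s"
  shows "prox_gauge s T (T x) (T y) = prox_gauge s T x y"
proof -
  define d where "d n = dist ((T ^^ Suc n) x) ((T ^^ Suc n) y)" for n
  have ratio: "(\<lambda>n. s (Suc n) / s n) \<longlonglongrightarrow> 1"
    using assms unfolding steady_scale_def .
  then have "\<forall>\<^sub>F n in sequentially. s (Suc n) / s n > 0"
    by (rule order_tendstoD) simp
  then have nonzero: "\<forall>\<^sub>F n in sequentially. s (Suc n) \<noteq> 0"
    by (rule eventually_mono) auto
  have inverse_ratio: "(\<lambda>n. ereal (s n / s (Suc n))) \<longlonglongrightarrow> 1"
    using tendsto_inverse[OF ratio] by (simp add: one_ereal_def)
  have "prox_gauge s T (T x) (T y) = liminf (\<lambda>n. ereal (s n / s (Suc n)) * ereal (s (Suc n) * d n))"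
    unfolding prox_gauge_apply d_def[symmetric]
    by (rule Liminf_eq, rule eventually_mono[OF nonzero]) simp
  also have "\<dots> = 1 * liminf (\<lambda>n. ereal (s (Suc n) * d n))"
    by (rule ereal_liminf_lim_mult[OF inverse_ratio]) auto
  also have "\<dots> = prox_gauge s T x y"
    unfolding prox_gauge_Suc d_def by simp
  finally show ?thesis .
qed

lemma borel_measurable_prox_gauge:
  fixes T :: "'a::{metric_space, second_countable_topology} \<Rightarrow> 'a"
  assumes "sets M = sets borel" and "T \<in> M \<rightarrow>\<^sub>M M"
  shows "case_prod (prox_gauge s T) \<in> borel_measurable (M \<Otimes>\<^sub>M M)"
proof -
  have "(T ^^ n) \<in> M \<rightarrow>\<^sub>M borel" for n
    using measurable_compose_n[OF assms(2)] measurable_cong_sets[OF refl assms(1)] by blast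
  then have "(\<lambda>z. ereal (s n * dist ((T ^^ n) (fst z)) ((T ^^ n) (snd z))))
      \<in> borel_measurable (M \<Otimes>\<^sub>M M)" for n
    by measurable
  then show ?thesis
    unfolding prox_gauge_def case_prod_beta by (rule borel_measurable_liminf)
qed

lemma distr_pair_measure_map_prod:
  assumes "sigma_finite_measure N"
    and "T \<in> M \<rightarrow>\<^sub>M M" "distr M M T = M"
    and "U \<in> N \<rightarrow>\<^sub>M N" "distr N N U = N"
  shows "distr (M \<Otimes>\<^sub>M N) (M \<Otimes>\<^sub>M N) (map_prod T U) = M \<Otimes>\<^sub>M N"
  using pair_measure_distr[OF assms(2,4)] assms(1,3,5) by (simp add: map_prod_def)

lemma AE_eq_if_measure_preserving_le:
  fixes g :: "'a \<Rightarrow> ereal"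
  assumes "finite_measure P"
    and S: "S \<in> P \<rightarrow>\<^sub>M P" and preserving: "distr P P S = P"
    and g[measurable]: "g \<in> borel_measurable P"
    and le: "\<And>z. z \<in> space P \<Longrightarrow> g (S z) \<le> g z"
  shows "AE z in P. g (S z) = g z"
proof -
  interpret finite_measure P by fact
  have no_crossing: "AE z in P. \<not> (g (S z) \<le> c \<and> c < g z)" for c
  proof -
    define A where "A = {z \<in> space P. c < g z}"
    define B where "B = S -` A \<inter> space P"
    have A: "A \<in> sets P" unfolding A_def by measurable
    have B: "B \<in> sets P" unfolding B_def by (rule measurable_sets[OF S A])
    have "B \<subseteq> A"
      using le measurable_space[OF S] unfolding A_def B_def by (auto intro: less_le_trans)
    have "emeasure P B = emeasure P A"
      using emeasure_distr[OF S A] preserving unfolding B_def by simp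
    then have "emeasure P (A - B) = 0"
      using emeasure_Diff[OF _ A B \<open>B \<subseteq> A\<close>] by (simp add: emeasure_eq_measure)
    then have "AE z in P. z \<notin> A - B"
      using A B by (intro AE_I'[of "A - B"]) auto
    then show ?thesis
      using AE_space by eventually_elim (auto simp: A_def B_def)
  qed
  have "AE z in P. \<forall>q :: rat. \<not> (g (S z) \<le> real_of_rat q \<and> real_of_rat q < g z)"
    using no_crossing by (simp add: AE_all_countable)
  then show ?thesis
    using AE_space
  proof eventually_elim
    case (elim z)
    show ?case
    proof (rule ccontr)
      assume "g (S z) \<noteq> g z"
      with le[OF \<open>z \<in> space P\<close>] have "g (S z) < g z" by simp
      then obtain q :: rat where "g (S z) < real_of_rat q" "real_of_rat q < g z"
        using ereal_dense3 by blast
      with elim show False by auto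
    qed
  qed
qed

theorem proposition3p8:
  fixes T :: "'a::{metric_space, second_countable_topology} \<Rightarrow> 'a"
    and M :: "'a measure"
    and s :: "nat \<Rightarrow> real"
  assumes "T \<in> borel \<rightarrow>\<^sub>M borel"
    and "sets M = sets borel"
    and "prob_space M"
    and "\<And>A. A \<in> sets borel \<Longrightarrow> emeasure M (T -` A) = emeasure M A"
    and "scale_seq s"
    and "monotone_scale s \<or> steady_scale s"
  shows "AE z in M \<Otimes>\<^sub>M M. prox_gauge s T (T (fst z)) (T (snd z)) = prox_gauge s T (fst z) (snd z)"
proof (cases "steady_scale s")
  case True
  then show ?thesis by (intro AE_I2 prox_gauge_apply_eq)
next
  case False
  with assms(6) have "monotone_scale s" by simp
  interpret pair_prob_space M M
    using \<open>prob_space M\<close> by (simp add: pair_prob_space_def pair_sigma_finite_def prob_space_imp_sigma_finite)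
  have space_M: "space M = UNIV"
    using sets_eq_imp_space_eq[OF assms(2)] by simp
  have T: "T \<in> M \<rightarrow>\<^sub>M M"
    using assms(1) measurable_cong_sets[OF assms(2) assms(2)] by simp
  have "distr M M T = M"
    by (rule measure_eqI) (use assms(2,4) T space_M in \<open>simp_all add: emeasure_distr\<close>)
  then have "distr (M \<Otimes>\<^sub>M M) (M \<Otimes>\<^sub>M M) (map_prod T T) = M \<Otimes>\<^sub>M M"
    using T by (intro distr_pair_measure_map_prod) unfold_locales
  then have "AE z in M \<Otimes>\<^sub>M M. case_prod (prox_gauge s T) (map_prod T T z) = case_prod (prox_gauge s T) z"
    using T P.finite_measure_axioms
    by (intro AE_eq_if_measure_preserving_le borel_measurable_prox_gauge[OF assms(2)])
      (auto simp: map_prod_def intro: prox_gauge_apply_le[OF \<open>monotone_scale s\<close>])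
  then show ?thesis
    by (simp add: split_beta')
qed

end
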